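(* Let $P$ be a $d$-polytope with symbolic slack matrix $S_P(\mathbf x)$, slack ideal $I_P\subset\mathbb{C}[\mathbf x]$ and non-incidence toric ideal $T_P\subset\mathbb{C}[\mathbf x]$ (all defined in the context). Then $P$ is morally $2$-level if and only if $I_P\subseteq T_P$.
   Context: Let $P\subset\mathbb{R}^d$ be a $d$-dimensional polytope with labelled vertices $\mathbf p_1,\dots,\mathbf p_v$ and labelled facets $F_1,\dots,F_f$. The support (zero pattern) of a slack matrix of $P$ is the $v\times f$ pattern whose $(i,j)$ entry is zero iff $\mathbf p_i\in F_j$. The symbolic slack matrix $S_P(\mathbf x)$ is the $v\times f$ matrix with a $0$ in entry $(i,j)$ if $\mathbf p_i\in F_j$ and a distinct variable $x_{ij}$ otherwise; let $x_1,\dots,x_t$ denote all these variables and $\mathbb{C}[\mathbf x]=\mathbb{C}[x_1,\dots,x_t]$. The slack ideal is $I_P=\langle (d+2)\text{-minors of } S_P(\mathbf x)\rangle : (x_1\cdots x_t)^\infty$, and the slack variety is $\mathcal V(I_P)\subseteq\mathbb{C}^t$; a point $\mathbf s\in\mathbb{C}^t$ is identified with the matrix $S_P(\mathbf s)$. $S_P(\mathbbm{1})$ denotes the $0/1$ matrix obtained by setting every variable to $1$. $P$ is called morally $2$-level if $S_P(\mathbbm 1)\in\mathcal V(I_P)$. The non-incidence graph $G_P$ is the bipartite graph on the vertices and facets of $P$ with an edge $\{\mathbf p_i,F_j\}$ iff $\mathbf p_i\notin F_j$; its edges are thus labelled by the variables $x_{ij}$. $T_P$ is the toric ideal of the vertex-edge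 incidence matrix of $G_P$, i.e. the kernel of the $\mathbb{C}$-algebra map $\mathbb{C}[\mathbf x]\to\mathbb{C}[s_1^{\pm1},\dots,s_v^{\pm1},u_1^{\pm1},\dots,u_f^{\pm1}]$, $x_{ij}\mapsto s_iu_j$. *)

theory Defs
  imports "HOL-Analysis.Analysis" "HOL-Library.Poly_Mapping" "Jordan_Normal_Form.Determinant"
begin

type_synonym 'v cpoly = "('v \<Rightarrow>\<^sub>0 nat) \<Rightarrow>\<^sub>0 complex"

definition PVar :: "'v \<Rightarrow> 'v cpoly" where
  "PVar v = Poly_Mapping.single (Poly_Mapping.single v 1) 1"

definition PConst :: "complex \<Rightarrow> 'v cpoly" where
  "PConst c = Poly_Mapping.single 0 c"

definition polys :: "'v set \<Rightarrow> 'v cpoly set" where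
  "polys X = {f. \<forall>m \<in> Poly_Mapping.keys f. Poly_Mapping.keys m \<subseteq> X}"

definition peval :: "('v \<Rightarrow> complex) \<Rightarrow> 'v cpoly \<Rightarrow> complex" where
  "peval a f = (\<Sum>m \<in> Poly_Mapping.keys f. Poly_Mapping.lookup f m * (\<Prod>v \<in> Poly_Mapping.keys m. a v ^ Poly_Mapping.lookup m v))"

definition psubst :: "('v \<Rightarrow> 'w cpoly) \<Rightarrow> 'v cpoly \<Rightarrow> 'w cpoly" where
  "psubst g f = (\<Sum>m \<in> Poly_Mapping.keys f. PConst (Poly_Mapping.lookup f m) * (\<Prod>v \<in> Poly_Mapping.keys m. g v ^ Poly_Mapping.lookup m v))"

definition gen_ideal :: "'v set \<Rightarrow> 'v cpoly set \<Rightarrow> 'v cpoly set" where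
  "gen_ideal X G = {f. \<exists>A r. finite A \<and> A \<subseteq> G \<and> (\<forall>g\<in>A. r g \<in> polys X) \<and>
                          f = (\<Sum>g\<in>A. r g * g)}"

definition saturation :: "'v set \<Rightarrow> 'v cpoly set \<Rightarrow> 'v cpoly \<Rightarrow> 'v cpoly set" where
  "saturation X I h = {f \<in> polys X. \<exists>N::nat. h ^ N * f \<in> I}"

definition poly_vertices :: "'a::euclidean_space set \<Rightarrow> 'a set" where
  "poly_vertices P = {p. p extreme_point_of P}"

definition poly_facets :: "'a::euclidean_space set \<Rightarrow> 'a set set" where
  "poly_facets P = {F. F facet_of P}"

definition slack_vars :: "(nat \<Rightarrow> 'a) \<Rightarrow> (nat \<Rightarrow> 'a set) \<Rightarrow> nat \<Rightarrow> nat \<Rightarrow> (nat \<times> nat) set" where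
  "slack_vars pv pf nv nf = {(i, j). i < nv \<and> j < nf \<and> pv i \<notin> pf j}"

definition sym_slack :: "(nat \<Rightarrow> 'a) \<Rightarrow> (nat \<Rightarrow> 'a set) \<Rightarrow> nat \<Rightarrow> nat \<Rightarrow> (nat \<times> nat) cpoly" where
  "sym_slack pv pf i j = (if pv i \<in> pf j then 0 else PVar (i, j))"

definition slack_minors :: "(nat \<Rightarrow> 'a) \<Rightarrow> (nat \<Rightarrow> 'a set) \<Rightarrow> nat \<Rightarrow> nat \<Rightarrow> nat \<Rightarrow> (nat \<times> nat) cpoly set" where
  "slack_minors pv pf nv nf k =
     {det (mat k k (\<lambda>(a, b). sym_slack pv pf (r a) (c b))) | r c.
        inj_on r {..<k} \<and> r ` {..<k} \<subseteq> {..<nv} \<and> inj_on c {..<k} \<and> c ` {..<k} \<subseteq> {..<nf}}"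

definition slack_ideal :: "(nat \<Rightarrow> 'a) \<Rightarrow> (nat \<Rightarrow> 'a set) \<Rightarrow> nat \<Rightarrow> nat \<Rightarrow> nat \<Rightarrow> (nat \<times> nat) cpoly set" where
  "slack_ideal pv pf nv nf d =
     (let X = slack_vars pv pf nv nf in
       saturation X (gen_ideal X (slack_minors pv pf nv nf (d + 2))) (\<Prod>v\<in>X. PVar v))"

text \<open>Toric ideal T_P of the non-incidence graph: kernel of x_ij \<mapsto> s_i u_j on C[x]
  (s_i = variable Inl i, u_j = variable Inr j).\<close>
definition nonincidence_toric_ideal :: "(nat \<Rightarrow> 'a) \<Rightarrow> (nat \<Rightarrow> 'a set) \<Rightarrow> nat \<Rightarrow> nat \<Rightarrow> (nat \<times> nat) cpoly set" where
  "nonincidence_toric_ideal pv pf nv nf =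
     {f \<in> polys (slack_vars pv pf nv nf).
        psubst (\<lambda>(i, j). PVar (Inl i) * PVar (Inr j) :: (nat + nat) cpoly) f = 0}"

text \<open>Morally 2-level: S_P(1) lies in the slack variety V(I_P).\<close>
definition morally_2_level :: "(nat \<Rightarrow> 'a) \<Rightarrow> (nat \<Rightarrow> 'a set) \<Rightarrow> nat \<Rightarrow> nat \<Rightarrow> nat \<Rightarrow> bool" where
  "morally_2_level pv pf nv nf d = (\<forall>f \<in> slack_ideal pv pf nv nf d. peval (\<lambda>_. 1) f = 0)"

end

theory Submission
  imports Defs
begin

(* Under the monomial map x_ij \<mapsto> s_i u_j, every entry of S_P(x) becomes s_i u_j times the
   corresponding entry of S_P(1). Pulling these factors out of rows and columns, a minor of S_P(x)
   is sent to a monomial times the same minor of S_P(1). So if S_P(1) is in the slack variety,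
   all (d+2)-minors lie in T_P, and since the monomial x_1 \<cdots> x_t is sent to a monomial, which
   is a non-zero-divisor of C[s,u], the saturation I_P lies in T_P as well. Conversely, evaluating
   at s = u = 1 shows that every element of T_P vanishes at x = 1.
   Only the zero pattern of S_P enters. *)

lemma poly_mapping_sum_monomials:
  "f = (\<Sum>m\<in>Poly_Mapping.keys f. Poly_Mapping.single m (Poly_Mapping.lookup f m))"
  by (rule poly_mapping_eqI) (simp add: lookup_sum lookup_single when_def in_keys_iff)

definition monomial_value :: "('v \<Rightarrow> 'b::comm_ring_1) \<Rightarrow> ('v \<Rightarrow>\<^sub>0 nat) \<Rightarrow> 'b" where
  "monomial_value h m = (\<Prod>v\<in>Poly_Mapping.keys m. h v ^ Poly_Mapping.lookup m v)"

lemma monomial_value_superset: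
  assumes "finite S" "Poly_Mapping.keys m \<subseteq> S"
  shows "monomial_value h m = (\<Prod>v\<in>S. h v ^ Poly_Mapping.lookup m v)"
  unfolding monomial_value_def
  by (rule prod.mono_neutral_left) (use assms in \<open>auto simp: in_keys_iff\<close>)

lemma monomial_value_add: "monomial_value h (m + m') = monomial_value h m * monomial_value h m'"
proof -
  let ?S = "Poly_Mapping.keys m \<union> Poly_Mapping.keys m'"
  have "monomial_value h (m + m') = (\<Prod>v\<in>?S. h v ^ Poly_Mapping.lookup (m + m') v)"
    by (rule monomial_value_superset) (auto dest: subsetD[OF keys_add])
  also have "\<dots> = (\<Prod>v\<in>?S. h v ^ Poly_Mapping.lookup m v) * (\<Prod>v\<in>?S. h v ^ Poly_Mapping.lookup m' v)"
    by (simp add: lookup_add power_add prod.distrib)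
  also have "\<dots> = monomial_value h m * monomial_value h m'"
    by (simp add: monomial_value_superset[symmetric])
  finally show ?thesis .
qed

text \<open>Common generalisation of peval and psubst: coefficients are mapped by c, variables by h.\<close>

definition eval_hom :: "(complex \<Rightarrow> 'b::comm_ring_1) \<Rightarrow> ('v \<Rightarrow> 'b) \<Rightarrow> 'v cpoly \<Rightarrow> 'b" where
  "eval_hom c h f = (\<Sum>m\<in>Poly_Mapping.keys f. c (Poly_Mapping.lookup f m) * monomial_value h m)"

context
  fixes c :: "complex \<Rightarrow> 'b::comm_ring_1"
  assumes c: "comm_ring_hom c"
begin

interpretation c: comm_ring_hom c by (rule c)

lemma eval_hom_superset:
  assumes "finite S" "Poly_Mapping.keys f \<subseteq> S"
  shows "eval_hom c h f = (\<Sum>m\<in>S. c (Poly_Mapping.lookup f m) * monomial_value h m)"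
  unfolding eval_hom_def
  by (rule sum.mono_neutral_left) (use assms in \<open>auto simp: in_keys_iff\<close>)

lemma eval_hom_add: "eval_hom c h (f + g) = eval_hom c h f + eval_hom c h g"
proof -
  let ?S = "Poly_Mapping.keys f \<union> Poly_Mapping.keys g"
  have "eval_hom c h (f + g) = (\<Sum>m\<in>?S. c (Poly_Mapping.lookup (f + g) m) * monomial_value h m)"
    by (rule eval_hom_superset) (auto dest: subsetD[OF keys_add])
  also have "\<dots> = (\<Sum>m\<in>?S. c (Poly_Mapping.lookup f m) * monomial_value h m)
                + (\<Sum>m\<in>?S. c (Poly_Mapping.lookup g m) * monomial_value h m)"
    by (simp add: lookup_add c.hom_add distrib_right sum.distrib)
  also have "\<dots> = eval_hom c h f + eval_hom c h g"
    by (simp add: eval_hom_superset[symmetric])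
  finally show ?thesis .
qed

lemma eval_hom_zero [simp]: "eval_hom c h 0 = 0"
  by (simp add: eval_hom_def)

lemma eval_hom_single: "eval_hom c h (Poly_Mapping.single m a) = c a * monomial_value h m"
  by (simp add: eval_hom_def)

lemma eval_hom_sum: "eval_hom c h (sum F A) = (\<Sum>x\<in>A. eval_hom c h (F x))"
  by (induction A rule: infinite_finite_induct) (simp_all add: eval_hom_add)

lemma eval_hom_mult: "eval_hom c h (f * g) = eval_hom c h f * eval_hom c h g"
proof -
  let ?F = "Poly_Mapping.keys f" and ?G = "Poly_Mapping.keys g"
  have "f * g = (\<Sum>m\<in>?F. Poly_Mapping.single m (Poly_Mapping.lookup f m))
              * (\<Sum>m\<in>?G. Poly_Mapping.single m (Poly_Mapping.lookup g m))"
    using poly_mapping_sum_monomials[of f] poly_mapping_sum_monomials[of g] by simp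
  also have "\<dots> = (\<Sum>m\<in>?F. \<Sum>m'\<in>?G.
                     Poly_Mapping.single (m + m') (Poly_Mapping.lookup f m * Poly_Mapping.lookup g m'))"
    by (simp add: sum_product mult_single)
  finally have "eval_hom c h (f * g) = (\<Sum>m\<in>?F. \<Sum>m'\<in>?G.
      c (Poly_Mapping.lookup f m) * monomial_value h m * (c (Poly_Mapping.lookup g m') * monomial_value h m'))"
    by (simp add: eval_hom_sum eval_hom_single monomial_value_add c.hom_mult mult_ac)
  also have "\<dots> = eval_hom c h f * eval_hom c h g"
    by (simp add: eval_hom_def sum_product)
  finally show ?thesis .
qed

lemma comm_ring_hom_eval_hom: "comm_ring_hom (eval_hom c h)"
  using eval_hom_single[of h 0 1]
  by unfold_locales (simp_all add: eval_hom_add eval_hom_mult monomial_value_def)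

end

lemma comm_ring_hom_id: "comm_ring_hom (\<lambda>x::complex. x)"
  by unfold_locales simp_all

lemma comm_ring_hom_PConst: "comm_ring_hom (PConst :: complex \<Rightarrow> 'v cpoly)"
  by unfold_locales (simp_all add: PConst_def single_add mult_single)

lemma peval_eq_eval_hom: "peval a = eval_hom (\<lambda>x. x) a"
  by (simp add: fun_eq_iff peval_def eval_hom_def monomial_value_def)

lemma psubst_eq_eval_hom: "psubst g = eval_hom PConst g"
  by (simp add: fun_eq_iff psubst_def eval_hom_def monomial_value_def)

lemma comm_ring_hom_peval: "comm_ring_hom (peval a)"
  unfolding peval_eq_eval_hom by (rule comm_ring_hom_eval_hom[OF comm_ring_hom_id])

lemma comm_ring_hom_psubst: "comm_ring_hom (psubst g)"
  unfolding psubst_eq_eval_hom by (rule comm_ring_hom_eval_hom[OF comm_ring_hom_PConst])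

lemma peval_zero [simp]: "peval a 0 = 0"
  by (simp add: peval_def)

lemma psubst_zero [simp]: "psubst g 0 = 0"
  by (simp add: psubst_def)

lemma peval_PConst [simp]: "peval a (PConst x) = x"
  unfolding peval_eq_eval_hom PConst_def by (simp add: eval_hom_single[OF comm_ring_hom_id] monomial_value_def)

lemma peval_PVar [simp]: "peval a (PVar v) = a v"
  unfolding peval_eq_eval_hom PVar_def by (simp add: eval_hom_single[OF comm_ring_hom_id] monomial_value_def)

lemma psubst_PVar [simp]: "psubst g (PVar v) = g v"
  unfolding psubst_eq_eval_hom PVar_def
  by (simp add: eval_hom_single[OF comm_ring_hom_PConst] PConst_def monomial_value_def)

lemma peval_psubst: "peval a (psubst g f) = peval (\<lambda>v. peval a (g v)) f"
proof -
  interpret pa: comm_ring_hom "peval a" by (rule comm_ring_hom_peval)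
  show ?thesis
    by (simp only: psubst_def pa.hom_sum pa.hom_mult pa.hom_prod pa.hom_power peval_PConst
          peval_def[of "\<lambda>v. peval a (g v)" f])
qed

lemma polys_add: "f \<in> polys X \<Longrightarrow> g \<in> polys X \<Longrightarrow> f + g \<in> polys X"
  unfolding polys_def using keys_add[of f g] by blast

lemma polys_mult:
  assumes "f \<in> polys X" "g \<in> polys X"
  shows "f * g \<in> polys X"
  unfolding polys_def
proof (intro CollectI ballI)
  fix m assume "m \<in> Poly_Mapping.keys (f * g)"
  then obtain a b where "m = a + b" "a \<in> Poly_Mapping.keys f" "b \<in> Poly_Mapping.keys g"
    using keys_mult[of f g] by blast
  then show "Poly_Mapping.keys m \<subseteq> X"
    using assms keys_add[of a b] unfolding polys_def by blast
qed

lemma polys_zero: "0 \<in> polys X"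
  by (simp add: polys_def)

lemma polys_one: "1 \<in> polys X"
  by (simp add: polys_def)

lemma polys_of_int: "of_int n \<in> polys X"
proof -
  have "Poly_Mapping.single 0 (of_int n) \<in> polys X"
    by (simp add: polys_def del: single_of_int)
  then show ?thesis by simp
qed

lemma polys_PVar: "v \<in> X \<Longrightarrow> PVar v \<in> polys X"
  by (simp add: polys_def PVar_def)

lemma polys_sum: "(\<And>x. x \<in> A \<Longrightarrow> F x \<in> polys X) \<Longrightarrow> sum F A \<in> polys X"
  by (induction A rule: infinite_finite_induct) (simp_all add: polys_zero polys_add)

lemma polys_prod: "(\<And>x. x \<in> A \<Longrightarrow> F x \<in> polys X) \<Longrightarrow> prod F A \<in> polys X"
  by (induction A rule: infinite_finite_induct) (simp_all add: polys_one polys_mult)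

lemma polys_det:
  assumes "\<And>i j. i < dim_row M \<Longrightarrow> j < dim_col M \<Longrightarrow> M $$ (i, j) \<in> polys X"
  shows "det M \<in> polys X"
proof -
  have "(\<Prod>i = 0..<dim_row M. M $$ (i, p i)) \<in> polys X"
    if "p permutes {0..<dim_row M}" "dim_row M = dim_col M" for p
  proof (rule polys_prod)
    fix i assume "i \<in> {0..<dim_row M}"
    then have "i < dim_row M" "p i < dim_col M"
      using that permutes_in_image[OF that(1)] by auto
    then show "M $$ (i, p i) \<in> polys X" by (rule assms)
  qed
  then show ?thesis
    unfolding det_def by (auto intro!: polys_sum polys_mult polys_of_int simp: polys_zero)
qed

lemma det_mat_scale_rows_cols:
  fixes x y :: "nat \<Rightarrow> 'b::comm_ring_1"
  shows "det (mat k k (\<lambda>(a, b). x a * y b * e (a, b)))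
       = (\<Prod>a=0..<k. x a) * (\<Prod>b=0..<k. y b) * det (mat k k e)"
proof -
  have "(\<Prod>i = 0..<k. x i * y (p i) * e (i, p i))
      = (\<Prod>a=0..<k. x a) * (\<Prod>b=0..<k. y b) * (\<Prod>i = 0..<k. e (i, p i))"
    if "p permutes {0..<k}" for p
    using prod.permute[OF that, of y] by (simp add: comp_def prod.distrib)
  moreover have "p permutes {0..<k} \<Longrightarrow> i < k \<Longrightarrow> p i < k" for p i
    using permutes_in_image by fastforce
  ultimately show ?thesis
    unfolding det_def by (auto simp: sum_distrib_left mult_ac intro!: sum.cong prod.cong)
qed

definition is_monomial :: "'v cpoly \<Rightarrow> bool" where
  "is_monomial q \<longleftrightarrow> (\<exists>M. q = Poly_Mapping.single M 1)"

lemma is_monomial_mult: "is_monomial p \<Longrightarrow> is_monomial q \<Longrightarrow> is_monomial (p * q)"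
  unfolding is_monomial_def by (auto simp: mult_single)

lemma is_monomial_one: "is_monomial 1"
  unfolding is_monomial_def by (metis single_one)

lemma is_monomial_prod: "(\<And>x. x \<in> A \<Longrightarrow> is_monomial (F x)) \<Longrightarrow> is_monomial (prod F A)"
  by (induction A rule: infinite_finite_induct) (simp_all add: is_monomial_one is_monomial_mult)

lemma is_monomial_power: "is_monomial p \<Longrightarrow> is_monomial (p ^ n)"
  by (induction n) (simp_all add: is_monomial_one is_monomial_mult)

lemma is_monomial_PVar: "is_monomial (PVar v)"
  unfolding is_monomial_def PVar_def by blast

lemma monomial_mult_eq_zeroD:
  assumes "is_monomial p" "p * F = 0"
  shows "F = 0"
proof (rule poly_mapping_eqI)
  fix k
  obtain M where p: "p = Poly_Mapping.single M 1"
    using assms(1) unfolding is_monomial_def by blast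
  have "p * F = (\<Sum>m\<in>Poly_Mapping.keys F. Poly_Mapping.single (M + m) (Poly_Mapping.lookup F m))"
    unfolding p by (subst poly_mapping_sum_monomials[of F]) (simp add: sum_distrib_left mult_single)
  then have "Poly_Mapping.lookup (p * F) (M + k) = Poly_Mapping.lookup F k"
    by (simp add: lookup_sum lookup_single when_def in_keys_iff)
  then show "Poly_Mapping.lookup F k = Poly_Mapping.lookup 0 k"
    using assms(2) by simp
qed

lemma saturation_gen_ideal_subset_kernel:
  fixes \<phi> :: "'v cpoly \<Rightarrow> 'w cpoly"
  assumes "comm_ring_hom \<phi>" "is_monomial (\<phi> h)" "\<And>g. g \<in> G \<Longrightarrow> \<phi> g = 0"
  shows "saturation X (gen_ideal X G) h \<subseteq> {f \<in> polys X. \<phi> f = 0}"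
proof
  interpret \<phi>: comm_ring_hom \<phi> by (rule assms(1))
  fix f assume "f \<in> saturation X (gen_ideal X G) h"
  then obtain N A r where f: "f \<in> polys X" and "A \<subseteq> G" and eq: "h ^ N * f = (\<Sum>g\<in>A. r g * g)"
    unfolding saturation_def gen_ideal_def by blast
  have "\<phi> h ^ N * \<phi> f = (\<Sum>g\<in>A. \<phi> (r g) * \<phi> g)"
    by (simp flip: \<phi>.hom_mult \<phi>.hom_power \<phi>.hom_sum add: eq)
  also have "\<dots> = 0"
    using \<open>A \<subseteq> G\<close> assms(3) by (auto intro!: sum.neutral)
  finally have "\<phi> h ^ N * \<phi> f = 0" .
  then have "\<phi> f = 0"
    using monomial_mult_eq_zeroD is_monomial_power assms(2) by blast
  with f show "f \<in> {f \<in> polys X. \<phi> f = 0}" by blast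
qed

definition edge_monomial :: "nat \<times> nat \<Rightarrow> (nat + nat) cpoly" where
  "edge_monomial = (\<lambda>(i, j). PVar (Inl i) * PVar (Inr j))"

lemma nonincidence_toric_ideal_eq:
  "nonincidence_toric_ideal pv pf nv nf
     = {f \<in> polys (slack_vars pv pf nv nf). psubst edge_monomial f = 0}"
  by (simp add: nonincidence_toric_ideal_def edge_monomial_def)

lemma peval_one_psubst_edge_monomial:
  "peval (\<lambda>_. 1) (psubst edge_monomial f) = peval (\<lambda>_. 1) f"
proof -
  interpret pe: comm_ring_hom "peval (\<lambda>_. 1) :: (nat + nat) cpoly \<Rightarrow> complex"
    by (rule comm_ring_hom_peval)
  have "(\<lambda>v. peval (\<lambda>_. 1) (edge_monomial v)) = (\<lambda>_. 1)"
    by (auto simp: fun_eq_iff edge_monomial_def pe.hom_mult)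
  then show ?thesis by (simp add: peval_psubst)
qed

lemma nonincidence_toric_ideal_vanishes_at_one:
  "f \<in> nonincidence_toric_ideal pv pf nv nf \<Longrightarrow> peval (\<lambda>_. 1) f = 0"
  using peval_one_psubst_edge_monomial[of f] by (auto simp: nonincidence_toric_ideal_eq)

lemma psubst_edge_monomial_sym_slack:
  "psubst edge_monomial (sym_slack pv pf i j)
     = PVar (Inl i) * PVar (Inr j) * PConst (peval (\<lambda>_. 1) (sym_slack pv pf i j))"
  by (simp add: sym_slack_def edge_monomial_def PConst_def)

lemma psubst_edge_monomial_minor:
  fixes r c :: "nat \<Rightarrow> nat" and k :: nat and pv :: "nat \<Rightarrow> 'a" and pf :: "nat \<Rightarrow> 'a set"
  defines "M \<equiv> mat k k (\<lambda>(a, b). sym_slack pv pf (r a) (c b))"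
  shows "psubst edge_monomial (det M)
       = (\<Prod>a=0..<k. PVar (Inl (r a))) * (\<Prod>b=0..<k. PVar (Inr (c b))) * PConst (peval (\<lambda>_. 1) (det M))"
proof -
  interpret ps: comm_ring_hom "psubst edge_monomial" by (rule comm_ring_hom_psubst)
  interpret pe: comm_ring_hom "peval (\<lambda>_. 1)" by (rule comm_ring_hom_peval)
  let ?E = "\<lambda>(a, b). PConst (peval (\<lambda>_. 1) (sym_slack pv pf (r a) (c b)))"
  have "map_mat (psubst edge_monomial) M = mat k k (\<lambda>(a, b). PVar (Inl (r a)) * PVar (Inr (c b)) * ?E (a, b))"
    unfolding M_def by (rule eq_matI) (auto simp: psubst_edge_monomial_sym_slack)
  then have "psubst edge_monomial (det M)
      = (\<Prod>a=0..<k. PVar (Inl (r a))) * (\<Prod>b=0..<k. PVar (Inr (c b))) * det (mat k k ?E)"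
    using det_mat_scale_rows_cols[where x = "\<lambda>a. PVar (Inl (r a))" and y = "\<lambda>b. PVar (Inr (c b))"
        and e = ?E and k = k]
    by (simp flip: ps.hom_det)
  also have "mat k k ?E = map_mat PConst (map_mat (peval (\<lambda>_. 1)) M)"
    unfolding M_def by (rule eq_matI) auto
  also have "det \<dots> = PConst (peval (\<lambda>_. 1) (det M))"
    using comm_ring_hom.hom_det[OF comm_ring_hom_PConst, of "map_mat (peval (\<lambda>_. 1)) M"] pe.hom_det[of M]
    by simp
  finally show ?thesis .
qed

lemma psubst_edge_monomial_slack_minor_eq_0:
  assumes "g \<in> slack_minors pv pf nv nf k" "peval (\<lambda>_. 1) g = 0"
  shows "psubst edge_monomial g = 0"
  using assms by (auto simp: slack_minors_def psubst_edge_monomial_minor PConst_def)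

lemma slack_minors_subset_polys: "slack_minors pv pf nv nf k \<subseteq> polys (slack_vars pv pf nv nf)"
proof
  fix g assume "g \<in> slack_minors pv pf nv nf k"
  then obtain r c where g: "g = det (mat k k (\<lambda>(a, b). sym_slack pv pf (r a) (c b)))"
    and "r ` {..<k} \<subseteq> {..<nv}" "c ` {..<k} \<subseteq> {..<nf}"
    unfolding slack_minors_def by blast
  then have "r a < nv" "c b < nf" if "a < k" "b < k" for a b
    using that by auto
  then show "g \<in> polys (slack_vars pv pf nv nf)"
    unfolding g by (intro polys_det) (auto simp: sym_slack_def slack_vars_def polys_zero intro!: polys_PVar)
qed

lemma slack_minors_subset_slack_ideal:
  "slack_minors pv pf nv nf (d + 2) \<subseteq> slack_ideal pv pf nv nf d"
proof
  fix g assume g: "g \<in> slack_minors pv pf nv nf (d + 2)"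
  then have "g \<in> gen_ideal (slack_vars pv pf nv nf) (slack_minors pv pf nv nf (d + 2))"
    unfolding gen_ideal_def by (intro CollectI exI[of _ "{g}"] exI[of _ "\<lambda>_. 1"]) (simp add: polys_one)
  with g subsetD[OF slack_minors_subset_polys g] show "g \<in> slack_ideal pv pf nv nf d"
    unfolding slack_ideal_def saturation_def Let_def by (auto intro!: exI[of _ 0])
qed

lemma is_monomial_psubst_edge_monomial_prod:
  "is_monomial (psubst edge_monomial (\<Prod>v\<in>V. PVar v))"
proof -
  interpret ps: comm_ring_hom "psubst edge_monomial" by (rule comm_ring_hom_psubst)
  show ?thesis
    unfolding ps.hom_prod psubst_PVar
    by (intro is_monomial_prod) (auto simp: edge_monomial_def intro!: is_monomial_mult is_monomial_PVar)
qed

theorem theorem3p6: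
  fixes P :: "'a::euclidean_space set"
    and pv :: "nat \<Rightarrow> 'a" and pf :: "nat \<Rightarrow> 'a set" and nv nf :: nat
  assumes "polytope P"
    and "aff_dim P = int DIM('a)"
    and "bij_betw pv {..<nv} (poly_vertices P)"
    and "bij_betw pf {..<nf} (poly_facets P)"
  shows "morally_2_level pv pf nv nf DIM('a) \<longleftrightarrow>
         slack_ideal pv pf nv nf DIM('a) \<subseteq> nonincidence_toric_ideal pv pf nv nf"
proof
  assume "morally_2_level pv pf nv nf DIM('a)"
  then have minors_vanish: "psubst edge_monomial g = 0"
    if "g \<in> slack_minors pv pf nv nf (DIM('a) + 2)" for g
    using that slack_minors_subset_slack_ideal psubst_edge_monomial_slack_minor_eq_0
    unfolding morally_2_level_def by blast
  from saturation_gen_ideal_subset_kernel[OF comm_ring_hom_psubst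
      is_monomial_psubst_edge_monomial_prod minors_vanish]
  show "slack_ideal pv pf nv nf DIM('a) \<subseteq> nonincidence_toric_ideal pv pf nv nf"
    by (simp add: slack_ideal_def nonincidence_toric_ideal_eq Let_def)
next
  assume "slack_ideal pv pf nv nf DIM('a) \<subseteq> nonincidence_toric_ideal pv pf nv nf"
  then show "morally_2_level pv pf nv nf DIM('a)"
    unfolding morally_2_level_def using nonincidence_toric_ideal_vanishes_at_one by blast
qed

end
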